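(* Let $H$ be a hypergraph with $R(H)=\{1,2\}$ such that the graph $H^2$ of its $2$-edges is bipartite and $H$ contains no closed path $\bar P_{2k}$ as a subgraph for any $k\ge1$. Then $\pi(H)=1$.
   Context: A hypergraph $H=(V,E)$ has finite vertex set $V$ and edge set $E\subseteq 2^V$; $R(H)=\{|F|:F\in E\}$. $H_1\subseteq H_2$ (subgraph) means there is an injective $f\colon V(H_1)\to V(H_2)$ with $f(F)\in E(H_2)$ for all $F\in E(H_1)$. For $G$ on $n$ vertices, $h_n(G)=\sum_{F\in E(G)}1/\binom{n}{|F|}$; $\pi_n(H)=\max\{h_n(G): G\text{ on } n \text{ vertices}, R(G)\subseteq R(H), H\not\subseteq G\}$ and $\pi(H)=\lim_n\pi_n(H)$. A closed path of length $m$, $\bar P_m$, is the hypergraph with vertices $x_1,\dots,x_m$, $1$-edges $\{x_1\},\{x_m\}$ and $2$-edges $\{x_i,x_{i+1}\}$ for $1\le i\le m-1$. *)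

theory Defs
  imports Complex_Main
begin

type_synonym 'a hgraph = "'a set \<times> 'a set set"

definition hypergraph :: "'a hgraph \<Rightarrow> bool" where
  "hypergraph H \<longleftrightarrow> finite (fst H) \<and> snd H \<subseteq> Pow (fst H)"

definition edge_sizes :: "'a hgraph \<Rightarrow> nat set" where
  "edge_sizes H = card ` snd H"

definition subgraph :: "'a hgraph \<Rightarrow> 'b hgraph \<Rightarrow> bool" where
  "subgraph H1 H2 \<longleftrightarrow> (\<exists>f. f ` fst H1 \<subseteq> fst H2 \<and> inj_on f (fst H1)
      \<and> (\<forall>F\<in>snd H1. f ` F \<in> snd H2))"

definition h_n :: "nat \<Rightarrow> 'a hgraph \<Rightarrow> real" where
  "h_n n G = (\<Sum>F\<in>snd G. 1 / real (n choose card F))"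

definition pi_n :: "'a hgraph \<Rightarrow> nat \<Rightarrow> real" where
  "pi_n H n = Max {h_n n G | G :: nat hgraph. fst G = {0..<n} \<and> snd G \<subseteq> Pow {0..<n}
       \<and> edge_sizes G \<subseteq> edge_sizes H \<and> \<not> subgraph H G}"

definition two_graph_bipartite :: "'a hgraph \<Rightarrow> bool" where
  "two_graph_bipartite H \<longleftrightarrow> (\<exists>A. A \<subseteq> fst H \<and>
      (\<forall>F\<in>snd H. card F = 2 \<longrightarrow> card (F \<inter> A) = 1))"

definition closed_path :: "nat \<Rightarrow> nat hgraph" where
  "closed_path m = ({1..m}, {{1}, {m}} \<union> {{i, i+1} | i. 1 \<le> i \<and> i \<le> m - 1})"

end

theory Submission
  imports Defs
begin

text \<open>
  The n singletons give h_n = 1 without containing H, which has a 2-edge; this is the lower bound.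
  For the upper bound, bipartiteness of the 2-edges and the absence of even closed paths force
  every walk along 2-edges between two vertices carrying 1-edges to have an odd number of vertices
  (a shortest even one would be a closed path). Colouring vertices by the parity of such walks, and
  by the bipartition where no 1-edge vertex is reachable, makes every 2-edge bichromatic and puts
  all 1-edge vertices in one class. Hence H embeds into any hypergraph containing K_{t,t},
  t = |V(H)|, whose first side consists of vertices carrying 1-edges. Finally, if h_n(G) > 1 + \<epsilon>,
  a positive proportion of all pairs are 2-edges meeting the set S of 1-edge vertices of G, so
  many vertices have linearly many neighbours in S, and a Kovari-Sos-Turan double count finds
  such a K_{t,t} once n is large.
\<close>

definition singletons :: "'a hgraph \<Rightarrow> 'a set" where
  "singletons G = {x. {x} \<in> snd G}"

definition two_edges :: "'a hgraph \<Rightarrow> 'a set set" where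
  "two_edges G = {F\<in>snd G. card F = 2}"

section \<open>Walks along 2-edges and the colouring of H\<close>

lemma walk_parity:
  assumes bipartite: "\<And>x y. adj x y \<Longrightarrow> (x \<in> A) \<noteq> (y \<in> A)"
    and "p \<noteq> []" and "successively adj p"
  shows "(hd p \<in> A \<longleftrightarrow> last p \<in> A) \<longleftrightarrow> odd (length p)"
  using assms(2,3)
proof (induction p)
  case (Cons x p)
  show ?case
  proof (cases "p = []")
    case False
    with Cons.prems have "adj x (hd p)" "successively adj p" by (auto simp: successively_Cons)
    with Cons.IH False bipartite[of x "hd p"] show ?thesis by auto
  qed simp
qed simp

lemma walk_contains_path:
  assumes "p \<noteq> []" and "successively adj p"
  shows "\<exists>q. q \<noteq> [] \<and> distinct q \<and> successively adj q \<and> hd q = hd p \<and> last q = last p"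
  using assms
proof (induction "length p" arbitrary: p rule: less_induct)
  case less
  show ?case
  proof (cases "distinct p")
    case False
    then obtain xs v ys zs where p: "p = xs @ [v] @ ys @ [v] @ zs"
      using not_distinct_decomp by blast
    define p' where "p' = xs @ [v] @ zs"
    have "p = (xs @ [v]) @ ys @ [v] @ zs" "p = (xs @ [v] @ ys) @ v # zs" unfolding p by simp_all
    then have "successively adj (xs @ [v])" "successively adj (v # zs)"
      using less.prems(2) by (metis successively_append_iff)+
    then have "successively adj p'"
      unfolding p'_def by (auto simp: successively_append_iff successively_Cons)
    moreover have "hd p' = hd p" "last p' = last p"
      unfolding p'_def p by (cases xs; simp) (cases zs; simp)
    moreover have "length p' < length p" "p' \<noteq> []" unfolding p'_def p by simp_all
    ultimately show ?thesis using less.hyps[of p'] by metis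
  qed (use less.prems in blast)
qed

lemma closed_path_subgraph:
  assumes H: "hypergraph H" and "q \<noteq> []" and "distinct q"
    and walk: "successively (\<lambda>x y. {x, y} \<in> snd H) q"
    and "{hd q} \<in> snd H" and "{last q} \<in> snd H"
  shows "subgraph (closed_path (length q)) H"
  unfolding subgraph_def closed_path_def fst_conv snd_conv
proof (intro exI conjI ballI)
  define m where "m = length q"
  have m: "m \<ge> 1" using \<open>q \<noteq> []\<close> unfolding m_def by (cases q) auto
  have edge: "{q ! i, q ! Suc i} \<in> snd H" if "Suc i < m" for i
    using successively_nth[OF walk] that unfolding m_def by blast
  have "q ! i \<in> fst H" if "i < m" for i
  proof (cases "Suc i < m")
    case True
    then show ?thesis using edge[OF True] H unfolding hypergraph_def by auto
  next
    case False
    then have "i = length q - 1" using that unfolding m_def by simp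
    then have "q ! i = last q" using \<open>q \<noteq> []\<close> by (simp add: last_conv_nth)
    then show ?thesis using \<open>{last q} \<in> snd H\<close> H unfolding hypergraph_def by auto
  qed
  then show "(\<lambda>i. q ! (i - 1)) ` {1..length q} \<subseteq> fst H" unfolding m_def by auto
  show "inj_on (\<lambda>i. q ! (i - 1)) {1..length q}"
    using \<open>distinct q\<close> by (auto simp: inj_on_def nth_eq_iff_index_eq)
  fix F assume "F \<in> {{1}, {length q}} \<union> {{i, i + 1} |i. 1 \<le> i \<and> i \<le> length q - 1}"
  then consider "F = {1}" | "F = {m}" | i where "F = {i, i + 1}" "1 \<le> i" "i \<le> m - 1"
    unfolding m_def by blast
  then show "(\<lambda>i. q ! (i - 1)) ` F \<in> snd H"
  proof cases
    case 1 then show ?thesis using \<open>{hd q} \<in> snd H\<close> \<open>q \<noteq> []\<close> by (simp add: hd_conv_nth)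
  next
    case 2 then show ?thesis using \<open>{last q} \<in> snd H\<close> \<open>q \<noteq> []\<close> unfolding m_def by (simp add: last_conv_nth)
  next
    case 3
    then have "Suc (i - 1) < m" and "(\<lambda>i. q ! (i - 1)) ` F = {q ! (i - 1), q ! Suc (i - 1)}"
      using m by auto
    then show ?thesis using edge by simp
  qed
qed

lemma two_graph_bipartiteE:
  assumes "two_graph_bipartite H"
  obtains A where "\<And>x y. {x, y} \<in> snd H \<Longrightarrow> x \<noteq> y \<Longrightarrow> (x \<in> A) \<noteq> (y \<in> A)"
proof -
  obtain A where A: "\<forall>F\<in>snd H. card F = 2 \<longrightarrow> card (F \<inter> A) = 1"
    using assms unfolding two_graph_bipartite_def by blast
  have "(x \<in> A) \<noteq> (y \<in> A)" if "{x, y} \<in> snd H" "x \<noteq> y" for x y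
  proof -
    have "card ({x, y} \<inter> A) = 1" using A that by auto
    then show ?thesis using \<open>x \<noteq> y\<close> by (cases "x \<in> A"; cases "y \<in> A") auto
  qed
  then show thesis using that by blast
qed

lemma singleton_walk_odd:
  assumes H: "hypergraph H" and bip: "two_graph_bipartite H"
    and no_path: "\<forall>k::nat. k \<ge> 1 \<longrightarrow> \<not> subgraph (closed_path (2 * k)) H"
    and walk: "p \<noteq> []" "successively (\<lambda>x y. {x, y} \<in> snd H \<and> x \<noteq> y) p"
    and ends: "{hd p} \<in> snd H" "{last p} \<in> snd H"
  shows "odd (length p)"
proof (rule ccontr)
  assume "\<not> odd (length p)"
  define adj where "adj x y \<longleftrightarrow> {x, y} \<in> snd H \<and> x \<noteq> y" for x y
  obtain A where A: "\<And>x y. {x, y} \<in> snd H \<Longrightarrow> x \<noteq> y \<Longrightarrow> (x \<in> A) \<noteq> (y \<in> A)"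
    using two_graph_bipartiteE[OF bip] by blast
  have bipartite: "(x \<in> A) \<noteq> (y \<in> A)" if "adj x y" for x y
    using A that unfolding adj_def by blast
  obtain q where q: "q \<noteq> []" "distinct q" "successively adj q" "hd q = hd p" "last q = last p"
    using walk_contains_path[of p adj] walk unfolding adj_def by blast
  have "even (length q)"
    using walk_parity[of adj A p] walk_parity[of adj A q] bipartite q walk \<open>\<not> odd (length p)\<close>
    unfolding adj_def by auto
  then obtain k where k: "length q = 2 * k" by (rule evenE)
  with \<open>q \<noteq> []\<close> have "k \<ge> 1" by (cases k) auto
  have "successively (\<lambda>x y. {x, y} \<in> snd H) q"
    using q(3) by (rule successively_mono) (simp add: adj_def)
  then have "subgraph (closed_path (2 * k)) H"
    using closed_path_subgraph[OF H q(1,2)] q(4,5) ends k(1) by metis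
  then show False using no_path \<open>k \<ge> 1\<close> by blast
qed

lemma walk_join_odd:
  assumes sym: "\<And>x y. adj x y \<Longrightarrow> adj y x"
    and odd_walks: "\<And>p. p \<noteq> [] \<Longrightarrow> successively adj p \<Longrightarrow> hd p \<in> M \<Longrightarrow> last p \<in> M \<Longrightarrow> odd (length p)"
    and p: "p \<noteq> []" "successively adj p" "hd p \<in> M"
    and q: "q \<noteq> []" "successively adj q" "hd q \<in> M"
    and "adj (last p) (last q)"
  shows "odd (length p + length q)"
proof -
  have "successively adj (rev q)"
    using q(2) sym unfolding successively_rev by (metis (no_types, lifting) successively_mono)
  then have "successively adj (p @ rev q)"
    using p q \<open>adj (last p) (last q)\<close> by (auto simp: successively_append_iff hd_rev)
  moreover have "hd (p @ rev q) \<in> M" "last (p @ rev q) \<in> M" using p q by (auto simp: last_rev)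
  ultimately show ?thesis using odd_walks[of "p @ rev q"] p(1) by simp
qed

lemma marked_two_colouring:
  assumes sym: "\<And>x y. adj x y \<Longrightarrow> adj y x"
    and bipartite: "\<And>x y. adj x y \<Longrightarrow> (x \<in> A) \<noteq> (y \<in> A)"
    and odd_walks: "\<And>p. p \<noteq> [] \<Longrightarrow> successively adj p \<Longrightarrow> hd p \<in> M \<Longrightarrow> last p \<in> M \<Longrightarrow> odd (length p)"
  shows "\<exists>c. (\<forall>x\<in>M. c x) \<and> (\<forall>x y. adj x y \<longrightarrow> c x \<noteq> c y)"
proof -
  define walk where "walk p \<longleftrightarrow> p \<noteq> [] \<and> successively adj p \<and> hd p \<in> M" for p
  define reach where "reach v \<longleftrightarrow> (\<exists>p. walk p \<and> last p = v)" for v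
  define odd_reach where "odd_reach v \<longleftrightarrow> (\<exists>p. walk p \<and> last p = v \<and> odd (length p))" for v
  \<comment> \<open>Parity of walks from M on the components meeting M (well defined by walk_join_odd),
      the bipartition on the others.\<close>
  define c where "c v \<longleftrightarrow> odd_reach v \<or> (\<not> reach v \<and> v \<in> A)" for v
  have extend: "walk (p @ [y])" if "walk p" "adj (last p) y" for p y
    using that unfolding walk_def by (auto simp: successively_append_iff)
  have reach_step: "reach y" if "reach x" "adj x y" for x y
    using that extend unfolding reach_def by (metis last_snoc)
  have odd_reach_step: "odd_reach y \<longleftrightarrow> \<not> odd_reach x" if "reach x" "adj x y" for x y
  proof
    assume "odd_reach y"
    then obtain q where q: "walk q" "last q = y" "odd (length q)" unfolding odd_reach_def by blast
    show "\<not> odd_reach x"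
    proof
      assume "odd_reach x"
      then obtain p where p: "walk p" "last p = x" "odd (length p)" unfolding odd_reach_def by blast
      then have "odd (length p + length q)"
        using walk_join_odd[where adj = adj and M = M and p = p and q = q, OF sym odd_walks] q \<open>adj x y\<close>
        unfolding walk_def by blast
      then show False using p(3) q(3) by simp
    qed
  next
    assume "\<not> odd_reach x"
    obtain p where p: "walk p" "last p = x" using \<open>reach x\<close> unfolding reach_def by blast
    then have "even (length p)" using \<open>\<not> odd_reach x\<close> unfolding odd_reach_def by blast
    then show "odd_reach y" using extend[of p y] p that(2) unfolding odd_reach_def by fastforce
  qed
  have "c x \<noteq> c y" if "adj x y" for x y
  proof (cases "reach x")
    case True
    then show ?thesis using reach_step odd_reach_step that unfolding c_def by blast
  next
    case False
    then have "\<not> reach y" using reach_step that sym by blast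
    then show ?thesis using False bipartite that unfolding c_def odd_reach_def reach_def by blast
  qed
  moreover have "c x" if "x \<in> M" for x
  proof -
    have "walk [x]" using that unfolding walk_def by simp
    then show ?thesis unfolding c_def odd_reach_def by force
  qed
  ultimately show ?thesis by blast
qed

definition anchored_colouring :: "'a hgraph \<Rightarrow> ('a \<Rightarrow> bool) \<Rightarrow> bool" where
  "anchored_colouring H c \<longleftrightarrow>
     (\<forall>x\<in>singletons H. c x) \<and> (\<forall>x y. {x, y} \<in> snd H \<longrightarrow> x \<noteq> y \<longrightarrow> c x \<noteq> c y)"

lemma anchored_colouring_exists:
  assumes H: "hypergraph H" and bip: "two_graph_bipartite H"
    and no_path: "\<forall>k::nat. k \<ge> 1 \<longrightarrow> \<not> subgraph (closed_path (2 * k)) H"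
  shows "\<exists>c. anchored_colouring H c"
proof -
  obtain A where A: "\<And>x y. {x, y} \<in> snd H \<Longrightarrow> x \<noteq> y \<Longrightarrow> (x \<in> A) \<noteq> (y \<in> A)"
    using two_graph_bipartiteE[OF bip] by blast
  have "\<exists>c. (\<forall>x\<in>singletons H. c x) \<and> (\<forall>x y. {x, y} \<in> snd H \<and> x \<noteq> y \<longrightarrow> c x \<noteq> c y)"
  proof (rule marked_two_colouring)
    show "{y, x} \<in> snd H \<and> y \<noteq> x" if "{x, y} \<in> snd H \<and> x \<noteq> y" for x y
      using that by (auto simp: insert_commute)
    show "(x \<in> A) \<noteq> (y \<in> A)" if "{x, y} \<in> snd H \<and> x \<noteq> y" for x y
      using A that by blast
    show "odd (length p)" if "p \<noteq> []" "successively (\<lambda>x y. {x, y} \<in> snd H \<and> x \<noteq> y) p"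
      "hd p \<in> singletons H" "last p \<in> singletons H" for p
      using singleton_walk_odd[OF H bip no_path] that unfolding singletons_def by simp
  qed
  then show ?thesis unfolding anchored_colouring_def by auto
qed

section \<open>Embedding H into anchored bicliques\<close>

definition anchored_biclique :: "'a hgraph \<Rightarrow> nat \<Rightarrow> bool" where
  "anchored_biclique G t \<longleftrightarrow> (\<exists>X Y. X \<subseteq> singletons G \<and> Y \<subseteq> fst G \<and> X \<inter> Y = {}
     \<and> card X = t \<and> card Y = t \<and> (\<forall>x\<in>X. \<forall>y\<in>Y. {x, y} \<in> snd G))"

lemma inj_on_into_two_classes:
  assumes "finite V" "finite X" "finite Y" "X \<inter> Y = {}" "card V \<le> card X" "card V \<le> card Y"
  obtains f where "inj_on f V" and "\<And>v. v \<in> V \<Longrightarrow> c v \<Longrightarrow> f v \<in> X"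
    and "\<And>v. v \<in> V \<Longrightarrow> \<not> c v \<Longrightarrow> f v \<in> Y"
proof -
  obtain g where g: "g ` {v\<in>V. c v} \<subseteq> X" "inj_on g {v\<in>V. c v}"
    using card_le_inj[of "{v\<in>V. c v}" X] assms card_mono[of V "{v\<in>V. c v}"] by auto
  obtain h where h: "h ` {v\<in>V. \<not> c v} \<subseteq> Y" "inj_on h {v\<in>V. \<not> c v}"
    using card_le_inj[of "{v\<in>V. \<not> c v}" Y] assms card_mono[of V "{v\<in>V. \<not> c v}"] by auto
  define f where "f v = (if c v then g v else h v)" for v
  have X: "f v \<in> X" if "v \<in> V" "c v" for v using g that unfolding f_def by auto
  have Y: "f v \<in> Y" if "v \<in> V" "\<not> c v" for v using h that unfolding f_def by auto
  have "inj_on f V"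
  proof (rule inj_onI)
    fix u v assume uv: "u \<in> V" "v \<in> V" "f u = f v"
    show "u = v"
    proof (cases "c u = c v")
      case True
      then show ?thesis using uv g(2) h(2) unfolding f_def inj_on_def by (cases "c u") auto
    next
      case False
      then show ?thesis using uv X[of u] X[of v] Y[of u] Y[of v] \<open>X \<inter> Y = {}\<close> by (cases "c u") auto
    qed
  qed
  then show thesis using that X Y by blast
qed

lemma anchored_colouring_embeds:
  assumes H: "hypergraph H" "edge_sizes H \<subseteq> {1, 2}" and c: "anchored_colouring H c"
    and G: "hypergraph G" "anchored_biclique G (card (fst H))"
  shows "subgraph H G"
proof -
  obtain X Y where XS: "X \<subseteq> singletons G" and YV: "Y \<subseteq> fst G" and XY: "X \<inter> Y = {}"
    and cX: "card X = card (fst H)" and cY: "card Y = card (fst H)"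
    and complete: "\<forall>x\<in>X. \<forall>y\<in>Y. {x, y} \<in> snd G"
    using G(2) unfolding anchored_biclique_def by blast
  have XV: "X \<subseteq> fst G" using XS G(1) unfolding hypergraph_def singletons_def by auto
  have "finite (fst H)" "finite X" "finite Y"
    using H(1) G(1) XV YV finite_subset unfolding hypergraph_def by blast+
  then obtain f where f: "inj_on f (fst H)" and fX: "\<And>v. v \<in> fst H \<Longrightarrow> c v \<Longrightarrow> f v \<in> X"
    and fY: "\<And>v. v \<in> fst H \<Longrightarrow> \<not> c v \<Longrightarrow> f v \<in> Y"
    using inj_on_into_two_classes[of "fst H" X Y] XY cX cY by auto
  have EV: "E \<subseteq> fst H" if "E \<in> snd H" for E using H(1) that unfolding hypergraph_def by auto
  show ?thesis unfolding subgraph_def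
  proof (intro exI[of _ f] conjI ballI)
    show "f ` fst H \<subseteq> fst G" using fX fY XV YV by blast
    show "inj_on f (fst H)" by (fact f)
  next
    fix E assume E: "E \<in> snd H"
    then have "card E = 1 \<or> card E = 2" using H(2) unfolding edge_sizes_def by auto
    then show "f ` E \<in> snd G"
    proof (elim disjE)
      assume "card E = 1"
      then obtain x where x: "E = {x}" by (auto simp: card_1_singleton_iff)
      then have "c x" "x \<in> fst H" using c E EV unfolding anchored_colouring_def singletons_def by auto
      then show ?thesis using fX XS x unfolding singletons_def by auto
    next
      assume "card E = 2"
      then obtain x y where xy: "E = {x, y}" "x \<noteq> y" by (meson card_2_iff)
      then have "x \<in> fst H" "y \<in> fst H" "c x \<noteq> c y"
        using c E EV unfolding anchored_colouring_def by auto
      then show ?thesis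
        using fX[of x] fX[of y] fY[of x] fY[of y] complete xy by (cases "c x") (auto simp: insert_commute)
    qed
  qed
qed

section \<open>Dense hypergraphs contain anchored bicliques\<close>

lemma biclique_from_degrees:
  fixes E :: "'a set set"
  assumes V: "finite V" and S: "S \<subseteq> V" and B: "B \<subseteq> V" and E: "\<forall>F\<in>E. card F = 2"
    and deg: "\<forall>y\<in>B. m \<le> card {x\<in>S. {x, y} \<in> E}"
    and many: "(t - 1) * (card V choose t) < card B * (m choose t)"
  shows "\<exists>X Y. X \<subseteq> S \<and> Y \<subseteq> V \<and> X \<inter> Y = {} \<and> card X = t \<and> card Y = t
           \<and> (\<forall>x\<in>X. \<forall>y\<in>Y. {x, y} \<in> E)"
proof (rule ccontr)
  assume no_biclique: "\<not> ?thesis"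
  define N where "N y = {x\<in>S. {x, y} \<in> E}" for y
  define Ts where "Ts = {T. T \<subseteq> S \<and> card T = t}"
  define C where "C T = {y\<in>V. T \<subseteq> N y}" for T
  define P where "P = Sigma B (\<lambda>y. {T. T \<subseteq> N y \<and> card T = t})"
  have finS: "finite S" and finB: "finite B" using V S B finite_subset by blast+
  have finN: "finite (N y)" for y using finS unfolding N_def by auto
  have finTs: "finite Ts" unfolding Ts_def using finS by (auto intro: finite_subset[of _ "Pow S"])
  have finC: "finite (C T)" for T unfolding C_def using V by auto
  have few_common: "card (C T) \<le> t - 1" if "T \<in> Ts" for T
  proof (rule ccontr)
    assume "\<not> card (C T) \<le> t - 1"
    then have "t \<le> card (C T)" by simp
    then obtain Y where Y: "Y \<subseteq> C T" "card Y = t" by (meson obtain_subset_with_card_n)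
    have complete: "\<forall>x\<in>T. \<forall>y\<in>Y. {x, y} \<in> E" using Y unfolding C_def N_def by auto
    then have "T \<inter> Y = {}" using E by fastforce
    then show False using no_biclique that Y complete unfolding Ts_def C_def by blast
  qed
  \<comment> \<open>Double count the pairs (y, T) with y \<in> B and T a t-subset of N y.\<close>
  have "card B * (m choose t) \<le> (\<Sum>y\<in>B. card (N y) choose t)"
    using sum_bounded_below[of B "m choose t"] deg binomial_right_mono unfolding N_def by simp
  also have "\<dots> = card P" unfolding P_def using finB finN by (simp add: n_subsets)
  also have "card P \<le> card (Sigma Ts C)"
    by (rule card_inj_on_le[where f = "\<lambda>(y, T). (T, y)"])
      (use B finTs finC in \<open>auto simp: inj_on_def P_def Ts_def C_def N_def\<close>)
  also have "\<dots> = (\<Sum>T\<in>Ts. card (C T))" using finTs finC by simp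
  also have "\<dots> \<le> card Ts * (t - 1)" using sum_bounded_above[of Ts "\<lambda>T. card (C T)" "t - 1"] few_common by simp
  also have "card Ts = card S choose t" unfolding Ts_def using finS by (simp add: n_subsets)
  also have "\<dots> \<le> card V choose t" using S V by (intro binomial_right_mono card_mono)
  finally show False using many by (simp add: mult.commute)
qed

lemma card_edges_meeting_le_degree_sum:
  fixes E :: "'a set set"
  assumes V: "finite V" "E \<subseteq> Pow V" and E: "\<forall>F\<in>E. card F = 2"
  shows "card {F\<in>E. F \<inter> S \<noteq> {}} \<le> (\<Sum>y\<in>V. card {x\<in>S. {x, y} \<in> E})"
proof -
  define P where "P = Sigma V (\<lambda>y. {x\<in>S. {x, y} \<in> E})"
  have "{x\<in>S. {x, y} \<in> E} \<subseteq> V" for y using V(2) by auto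
  then have fin: "finite {x\<in>S. {x, y} \<in> E}" for y using V(1) finite_subset by blast
  then have "finite P" unfolding P_def using V(1) by blast
  have "{F\<in>E. F \<inter> S \<noteq> {}} \<subseteq> (\<lambda>(y, x). {x, y}) ` P"
  proof
    fix F assume F: "F \<in> {F\<in>E. F \<inter> S \<noteq> {}}"
    then obtain x where x: "x \<in> F" "x \<in> S" by auto
    have "card F = 2" using E F by auto
    then obtain u v where "F = {u, v}" by (auto simp: card_2_iff)
    then obtain y where y: "F = {x, y}" using x(1) by (cases "x = u") (auto simp: insert_commute)
    then have "(y, x) \<in> P" using F x V(2) unfolding P_def by auto
    then show "F \<in> (\<lambda>(y, x). {x, y}) ` P" using y by force
  qed
  then have "card {F\<in>E. F \<inter> S \<noteq> {}} \<le> card P"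
    using \<open>finite P\<close> by (meson card_image_le card_mono finite_imageI le_trans)
  also have "card P = (\<Sum>y\<in>V. card {x\<in>S. {x, y} \<in> E})"
    unfolding P_def using V(1) fin by simp
  finally show ?thesis .
qed

lemma card_large_values_gt:
  fixes f :: "'a \<Rightarrow> real"
  assumes V: "finite V" "real (card V) \<le> N" and bound: "\<forall>y\<in>V. f y \<le> N" and \<delta>: "\<delta> \<ge> 0"
    and sum: "2 * \<delta> * N\<^sup>2 < (\<Sum>y\<in>V. f y)"
  shows "\<delta> * N < real (card {y\<in>V. \<delta> * N \<le> f y})"
proof -
  define B where "B = {y\<in>V. \<delta> * N \<le> f y}"
  have "(\<Sum>y\<in>V. f y) = (\<Sum>y\<in>B. f y) + (\<Sum>y\<in>V - B. f y)"
    using V by (simp add: B_def sum.subset_diff[of B V])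
  also have "(\<Sum>y\<in>B. f y) \<le> real (card B) * N"
    using sum_bounded_above[of B f N] bound unfolding B_def by simp
  also have "(\<Sum>y\<in>V - B. f y) \<le> real (card (V - B)) * (\<delta> * N)"
    using sum_bounded_above[of "V - B" f "\<delta> * N"] unfolding B_def by force
  also have "\<dots> \<le> N * (\<delta> * N)"
    using V card_mono[of V "V - B"] \<delta> sum by (intro mult_right_mono) auto
  finally have "\<delta> * N * N < real (card B) * N"
    using sum by (simp add: power2_eq_square algebra_simps)
  moreover have "N > 0"
  proof (rule ccontr)
    assume "\<not> N > 0"
    then have "card V = 0" using V by linarith
    then have "V = {}" using V by simp
    moreover have "0 \<le> 2 * \<delta> * N\<^sup>2" using \<delta> by simp
    ultimately show False using sum by simp
  qed
  ultimately show ?thesis unfolding B_def by simp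
qed

lemma eventually_binomial_count_less:
  fixes \<delta> :: real
  assumes \<delta>: "\<delta> > 0" and t: "t \<ge> 1"
  shows "\<forall>\<^sub>F n in sequentially. \<forall>b m. \<delta> * real n \<le> real b \<longrightarrow> \<delta> * real n \<le> real m
           \<longrightarrow> (t - 1) * (n choose t) < b * (m choose t)"
proof -
  define c where "c = \<delta> * (\<delta> / real t) ^ t"
  have c: "c > 0" using \<delta> t unfolding c_def by simp
  have "\<forall>\<^sub>F n in sequentially. (real t - 1) / c < real n \<and> real t / \<delta> < real n"
    using filterlim_real_sequentially unfolding filterlim_at_top_dense
    by (intro eventually_conj) blast+
  then show ?thesis
  proof (rule eventually_mono, intro allI impI)
    fix n b m
    assume n: "(real t - 1) / c < real n \<and> real t / \<delta> < real n"
      and b: "\<delta> * real n \<le> real b" and m: "\<delta> * real n \<le> real m"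
    have "real t < \<delta> * real n" using n pos_divide_less_eq[OF \<delta>] by (simp add: mult.commute)
    then have tm: "t \<le> m" using m by linarith
    have n_pos: "real n > 0" using \<open>real t < \<delta> * real n\<close> \<delta> t by (cases "n = 0") auto
    have "real (n choose t) \<le> real n ^ t"
      by (cases "t \<le> n") (simp_all add: binomial_le_pow binomial_eq_0 flip: of_nat_power)
    then have "real ((t - 1) * (n choose t)) \<le> (real t - 1) * real n ^ t"
      using t by (simp add: of_nat_diff mult_left_mono)
    also have "\<dots> < c * real n * real n ^ t"
      using n c n_pos by (intro mult_strict_right_mono) (simp_all add: field_simps)
    also have "\<dots> = \<delta> * real n * (\<delta> * real n / real t) ^ t"
      unfolding c_def by (simp add: power_mult_distrib field_simps)
    also have "\<dots> \<le> real b * (real m / real t) ^ t"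
      using b m \<delta> n_pos by (intro mult_mono power_mono divide_right_mono) auto
    also have "\<dots> \<le> real b * real (m choose t)"
      using binomial_ge_n_over_k_pow_k[OF tm] by (intro mult_left_mono) auto
    finally show "(t - 1) * (n choose t) < b * (m choose t)"
      by (simp flip: of_nat_mult)
  qed
qed

lemma real_choose_two: "real (m choose 2) = real m * (real m - 1) / 2"
  by (induction m) (simp_all add: numeral_2_eq_2 field_simps)

lemma h_n_one_two:
  assumes fin: "finite (snd G)" and sizes: "edge_sizes G \<subseteq> {1, 2}"
  shows "h_n n G = real (card (singletons G)) / real n + real (card (two_edges G)) / real (n choose 2)"
proof -
  define E1 where "E1 = {F\<in>snd G. card F = 1}"
  have "snd G = E1 \<union> two_edges G"
    using sizes unfolding edge_sizes_def E1_def two_edges_def by auto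
  moreover have "finite E1" "finite (two_edges G)" "E1 \<inter> two_edges G = {}"
    using fin unfolding E1_def two_edges_def by auto
  ultimately have split: "h_n n G = (\<Sum>F\<in>E1. 1 / real (n choose card F))
                                  + (\<Sum>F\<in>two_edges G. 1 / real (n choose card F))"
    unfolding h_n_def by (simp add: sum.union_disjoint)
  have "E1 = (\<lambda>x. {x}) ` singletons G"
    unfolding E1_def singletons_def by (auto simp: card_Suc_eq)
  then have "(\<Sum>F\<in>E1. 1 / real (n choose card F)) = real (card (singletons G)) / real n"
    by (simp add: sum.reindex)
  moreover have "(\<Sum>F\<in>two_edges G. 1 / real (n choose card F)) = real (card (two_edges G)) / real (n choose 2)"
    unfolding two_edges_def by simp
  ultimately show ?thesis using split by (simp only:)
qed

lemma many_edges_at_singletons: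
  fixes G :: "nat hgraph"
  assumes G: "snd G \<subseteq> Pow {0..<n}" "edge_sizes G \<subseteq> {1, 2}" and n: "n \<ge> 2"
    and dense: "1 + \<epsilon> < h_n n G"
  shows "\<epsilon> * real (n choose 2) < real (card {F\<in>two_edges G. F \<inter> singletons G \<noteq> {}})"
proof -
  define S where "S = singletons G"
  define E where "E = two_edges G"
  define C where "C = real (n choose 2)"
  define s where "s = real (card S)"
  have S: "S \<subseteq> {0..<n}" "finite S" using G(1) unfolding S_def singletons_def by (auto intro: finite_subset)
  have sn: "s \<le> real n" using card_mono[OF _ S(1)] unfolding s_def by simp
  have C: "C = real n * (real n - 1) / 2" "C > 0"
    using n unfolding C_def real_choose_two by auto
  have finG: "finite (snd G)" using G(1) finite_subset by (metis finite_Pow_iff finite_atLeastLessThan)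
  have "1 + \<epsilon> - s / real n < real (card E) / C"
    using dense h_n_one_two[OF finG G(2)] unfolding s_def S_def E_def C_def by simp
  then have many: "(1 + \<epsilon> - s / real n) * C < real (card E)"
    using C(2) pos_less_divide_eq by blast
  \<comment> \<open>2-edges missing S lie inside the n - |S| remaining vertices.\<close>
  have "card E \<le> card ({F\<in>E. F \<inter> S \<noteq> {}} \<union> {F. F \<subseteq> {0..<n} - S \<and> card F = 2})"
    using G(1) finG unfolding E_def two_edges_def
    by (intro card_mono) (auto intro: finite_subset[of _ "Pow {0..<n}"])
  also have "\<dots> \<le> card {F\<in>E. F \<inter> S \<noteq> {}} + card {F. F \<subseteq> {0..<n} - S \<and> card F = 2}"
    by (rule card_Un_le)
  also have "card {F. F \<subseteq> {0..<n} - S \<and> card F = 2} = (n - card S) choose 2"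
    using S by (simp add: n_subsets card_Diff_subset)
  finally have "real (card E) \<le> real (card {F\<in>E. F \<inter> S \<noteq> {}}) + real ((n - card S) choose 2)"
    by linarith
  moreover have "real ((n - card S) choose 2) \<le> (1 - s / real n) * C"
  proof -
    have "real ((n - card S) choose 2) = (real n - s) * (real n - s - 1) / 2"
      using card_mono[OF _ S(1)] unfolding real_choose_two s_def by (simp add: of_nat_diff)
    also have "\<dots> \<le> (real n - s) * (real n - 1) / 2"
      using sn unfolding s_def by (intro divide_right_mono mult_left_mono) auto
    also have "\<dots> = (1 - s / real n) * C" unfolding C(1) using n by (simp add: field_simps)
    finally show ?thesis .
  qed
  moreover have "0 \<le> s" unfolding s_def by simp
  ultimately have "\<epsilon> * C < real (card {F\<in>E. F \<inter> S \<noteq> {}})"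
    using many by (simp add: algebra_simps)
  then show ?thesis unfolding C_def E_def S_def .
qed

lemma singleton_degree_sum_gt:
  fixes G :: "nat hgraph"
  assumes G: "snd G \<subseteq> Pow {0..<n}" "edge_sizes G \<subseteq> {1, 2}" and n: "n \<ge> 2" and \<epsilon>: "\<epsilon> > 0"
    and dense: "1 + \<epsilon> < h_n n G"
  shows "\<epsilon> / 4 * (real n)\<^sup>2 < (\<Sum>y\<in>{0..<n}. real (card {x\<in>singletons G. {x, y} \<in> two_edges G}))"
proof -
  have E: "two_edges G \<subseteq> Pow {0..<n}" "\<forall>F\<in>two_edges G. card F = 2"
    using G(1) unfolding two_edges_def by auto
  have "\<epsilon> / 4 * (real n)\<^sup>2 = \<epsilon> * (real n * (real n / 2)) / 2"
    by (simp add: power2_eq_square)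
  also have "\<dots> \<le> \<epsilon> * (real n * (real n - 1)) / 2"
    using n \<epsilon> by (intro divide_right_mono mult_left_mono) auto
  also have "\<dots> = \<epsilon> * real (n choose 2)"
    by (simp add: real_choose_two)
  also have "\<dots> < real (card {F\<in>two_edges G. F \<inter> singletons G \<noteq> {}})"
    using many_edges_at_singletons[OF G n dense] .
  also have "\<dots> \<le> (\<Sum>y\<in>{0..<n}. real (card {x\<in>singletons G. {x, y} \<in> two_edges G}))"
    using card_edges_meeting_le_degree_sum[OF finite_atLeastLessThan E, of "singletons G"]
    by (simp flip: of_nat_sum)
  finally show ?thesis .
qed

lemma eventually_anchored_biclique:
  fixes \<epsilon> :: real
  assumes \<epsilon>: "\<epsilon> > 0" and t: "t \<ge> 1"
  shows "\<forall>\<^sub>F n in sequentially. \<forall>G :: nat hgraph. fst G = {0..<n} \<longrightarrow> snd G \<subseteq> Pow {0..<n}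
           \<longrightarrow> edge_sizes G \<subseteq> {1, 2} \<longrightarrow> 1 + \<epsilon> < h_n n G \<longrightarrow> anchored_biclique G t"
proof -
  define \<delta> where "\<delta> = \<epsilon> / 8"
  have \<delta>: "\<delta> > 0" using \<epsilon> unfolding \<delta>_def by simp
  have "\<forall>\<^sub>F n in sequentially. 2 \<le> n \<and> (\<forall>b m. \<delta> * real n \<le> real b \<longrightarrow> \<delta> * real n \<le> real m
          \<longrightarrow> (t - 1) * (n choose t) < b * (m choose t))"
    using eventually_ge_at_top eventually_binomial_count_less[OF \<delta> t] by (rule eventually_conj)
  then show ?thesis
  proof (rule eventually_mono, intro allI impI)
    fix n and G :: "nat hgraph"
    assume n: "2 \<le> n \<and> (\<forall>b m. \<delta> * real n \<le> real b \<longrightarrow> \<delta> * real n \<le> real m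
          \<longrightarrow> (t - 1) * (n choose t) < b * (m choose t))"
      and G: "fst G = {0..<n}" "snd G \<subseteq> Pow {0..<n}" "edge_sizes G \<subseteq> {1, 2}" "1 + \<epsilon> < h_n n G"
    define N where "N y = {x\<in>singletons G. {x, y} \<in> two_edges G}" for y
    define B where "B = {y\<in>{0..<n}. \<delta> * real n \<le> real (card (N y))}"
    have S: "singletons G \<subseteq> {0..<n}" using G(2) unfolding singletons_def by auto
    have "2 * \<delta> * (real n)\<^sup>2 < (\<Sum>y\<in>{0..<n}. real (card (N y)))"
      using singleton_degree_sum_gt[OF G(2,3) _ \<epsilon> G(4)] n unfolding \<delta>_def N_def by simp
    moreover have "real (card (N y)) \<le> real n" for y
      using card_mono[of "{0..<n}" "N y"] S unfolding N_def by auto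
    ultimately have B: "\<delta> * real n < real (card B)"
      unfolding B_def using \<delta> by (intro card_large_values_gt) auto
    define m where "m = nat \<lceil>\<delta> * real n\<rceil>"
    have m: "\<delta> * real n \<le> real m" unfolding m_def by linarith
    have deg: "\<forall>y\<in>B. m \<le> card (N y)"
      unfolding B_def m_def by (simp add: nat_le_iff ceiling_le_iff)
    have count: "(t - 1) * (card {0..<n} choose t) < card B * (m choose t)"
      using n less_imp_le[OF B] m unfolding card_atLeastLessThan diff_zero by blast
    have "B \<subseteq> {0..<n}" unfolding B_def by auto
    moreover have "\<forall>F\<in>two_edges G. card F = 2" unfolding two_edges_def by simp
    ultimately obtain X Y where "X \<subseteq> singletons G" "Y \<subseteq> {0..<n}" "X \<inter> Y = {}" "card X = t"
        "card Y = t" "\<forall>x\<in>X. \<forall>y\<in>Y. {x, y} \<in> two_edges G"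
      using biclique_from_degrees[OF finite_atLeastLessThan S _ _ deg[unfolded N_def] count] by blast
    then show "anchored_biclique G t" unfolding anchored_biclique_def G(1)
      by (intro exI[of _ X] exI[of _ Y]) (auto simp: two_edges_def)
  qed
qed

section \<open>The density pi\<close>

lemma finite_h_n_values:
  assumes "finite V"
  shows "finite {h_n n G | G :: 'a hgraph. fst G = V \<and> snd G \<subseteq> Pow V \<and> P G}"
proof (rule finite_subset)
  show "{h_n n G | G :: 'a hgraph. fst G = V \<and> snd G \<subseteq> Pow V \<and> P G}
          \<subseteq> (\<lambda>E. h_n n (V, E)) ` Pow (Pow V)"
  proof
    fix h assume "h \<in> {h_n n G | G :: 'a hgraph. fst G = V \<and> snd G \<subseteq> Pow V \<and> P G}"
    then obtain G :: "'a hgraph" where "h = h_n n G" "fst G = V" "snd G \<subseteq> Pow V" by blast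
    then have "h = h_n n (V, snd G)" by (metis prod.collapse)
    then show "h \<in> (\<lambda>E. h_n n (V, E)) ` Pow (Pow V)" using \<open>snd G \<subseteq> Pow V\<close> by blast
  qed
qed (use assms in simp)

lemma h_n_le_pi_n:
  assumes "fst G = {0..<n}" "snd G \<subseteq> Pow {0..<n}" "edge_sizes G \<subseteq> edge_sizes H" "\<not> subgraph H G"
  shows "h_n n G \<le> pi_n H n"
  unfolding pi_n_def by (rule Max_ge[OF finite_h_n_values]) (use assms in blast)+

lemma pi_n_le:
  assumes "snd H \<noteq> {}"
    and bound: "\<And>G. fst G = {0..<n} \<Longrightarrow> snd G \<subseteq> Pow {0..<n} \<Longrightarrow> edge_sizes G \<subseteq> edge_sizes H
                  \<Longrightarrow> \<not> subgraph H G \<Longrightarrow> h_n n G \<le> b"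
  shows "pi_n H n \<le> b"
proof -
  \<comment> \<open>The empty hypergraph keeps the maximum in pi_n from ranging over an empty set.\<close>
  have "\<not> subgraph H ({0..<n}, {})" using assms(1) unfolding subgraph_def by auto
  then have "h_n n ({0..<n}, {}) \<in> {h_n n G | G :: nat hgraph. fst G = {0..<n} \<and> snd G \<subseteq> Pow {0..<n}
       \<and> edge_sizes G \<subseteq> edge_sizes H \<and> \<not> subgraph H G}"
    by (force simp: edge_sizes_def)
  then show ?thesis
    unfolding pi_n_def using bound by (intro Max.boundedI finite_h_n_values) auto
qed

lemma one_le_pi_n:
  assumes H: "hypergraph H" "1 \<in> edge_sizes H" "2 \<in> edge_sizes H" and n: "n \<ge> 1"
  shows "1 \<le> pi_n H n"
proof -
  obtain F where F: "F \<in> snd H" "card F = 2" using H(3) unfolding edge_sizes_def by (metis imageE)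
  define G :: "nat hgraph" where "G = ({0..<n}, (\<lambda>x. {x}) ` {0..<n})"
  have "h_n n G = 1"
    using n unfolding h_n_def G_def by (simp add: sum.reindex)
  moreover have "\<not> subgraph H G"
  proof
    assume "subgraph H G"
    then obtain f where f: "inj_on f (fst H)" "f ` F \<in> snd G" using F(1) unfolding subgraph_def by blast
    have "F \<subseteq> fst H" using H(1) F(1) unfolding hypergraph_def by auto
    then have "card (f ` F) = 2" using F(2) card_image inj_on_subset[OF f(1)] by metis
    then show False using f(2) unfolding G_def by auto
  qed
  moreover have "edge_sizes G \<subseteq> edge_sizes H" using H(2) n unfolding edge_sizes_def G_def by auto
  ultimately show ?thesis using h_n_le_pi_n[of G n H] unfolding G_def by auto
qed

lemma eventually_pi_n_le:
  assumes H: "hypergraph H" "edge_sizes H = {1, 2}" and c: "anchored_colouring H c"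
    and \<epsilon>: "\<epsilon> > 0"
  shows "\<forall>\<^sub>F n in sequentially. pi_n H n \<le> 1 + \<epsilon>"
proof -
  have "2 \<in> card ` snd H" using H(2) unfolding edge_sizes_def by simp
  then obtain F where F: "F \<in> snd H" "card F = 2" by (metis imageE)
  have "card F \<le> card (fst H)"
    using H(1) F(1) unfolding hypergraph_def by (intro card_mono) auto
  then have "card (fst H) \<ge> 1" using F(2) by simp
  from eventually_anchored_biclique[OF \<epsilon> this]
  show ?thesis
  proof (rule eventually_mono)
    fix n
    assume dense: "\<forall>G :: nat hgraph. fst G = {0..<n} \<longrightarrow> snd G \<subseteq> Pow {0..<n}
      \<longrightarrow> edge_sizes G \<subseteq> {1, 2} \<longrightarrow> 1 + \<epsilon> < h_n n G \<longrightarrow> anchored_biclique G (card (fst H))"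
    show "pi_n H n \<le> 1 + \<epsilon>"
    proof (rule pi_n_le)
      show "snd H \<noteq> {}" using F(1) by auto
      fix G :: "nat hgraph"
      assume G: "fst G = {0..<n}" "snd G \<subseteq> Pow {0..<n}" "edge_sizes G \<subseteq> edge_sizes H"
        "\<not> subgraph H G"
      have "hypergraph G" using G(1,2) unfolding hypergraph_def by simp
      show "h_n n G \<le> 1 + \<epsilon>"
      proof (rule ccontr)
        assume "\<not> h_n n G \<le> 1 + \<epsilon>"
        then have "1 + \<epsilon> < h_n n G" by simp
        moreover have "edge_sizes G \<subseteq> {1, 2}" using G(3) H(2) by simp
        ultimately have "anchored_biclique G (card (fst H))" using dense[rule_format, OF G(1,2)] by blast
        then have "subgraph H G"
          using anchored_colouring_embeds[OF H(1) _ c \<open>hypergraph G\<close>] H(2) by simp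
        then show False using G(4) by contradiction
      qed
    qed
  qed
qed

theorem mainTheorem10:
  fixes H :: "'a hgraph"
  assumes "hypergraph H"
    and "edge_sizes H = {1, 2}"
    and "two_graph_bipartite H"
    and "\<forall>k::nat. k \<ge> 1 \<longrightarrow> \<not> subgraph (closed_path (2 * k)) H"
  shows "(\<lambda>n. pi_n H n) \<longlonglongrightarrow> 1"
proof (rule order_tendstoI)
  fix a :: real assume "a < 1"
  show "\<forall>\<^sub>F n in sequentially. a < pi_n H n"
    by (rule eventually_mono[OF eventually_ge_at_top[of 1]])
      (use one_le_pi_n[OF assms(1)] assms(2) \<open>a < 1\<close> in force)
next
  fix a :: real assume "1 < a"
  obtain c where "anchored_colouring H c"
    using anchored_colouring_exists[OF assms(1,3,4)] by blast
  then have "\<forall>\<^sub>F n in sequentially. pi_n H n \<le> 1 + (a - 1) / 2"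
    using eventually_pi_n_le[OF assms(1,2)] \<open>1 < a\<close> by simp
  moreover have "x \<le> 1 + (a - 1) / 2 \<Longrightarrow> x < a" for x :: real using \<open>1 < a\<close> by (simp add: field_simps)
  ultimately show "\<forall>\<^sub>F n in sequentially. pi_n H n < a"
    by (rule eventually_mono)
qed

end
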